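(* Let $\mathbf{X} \in \mathbb{R}^{n \times m}$ be a matrix with rows $\mathbf{x}_1^\top, \dots, \mathbf{x}_n^\top$ and let $\mathbf{y} = (y_1,\dots,y_n)^\top \in \mathbb{R}^n$. Assume $\mathbf{X}$ has full row rank, i.e. $\operatorname{rank}(\mathbf{X}) = n$. Let $\hat{\beta}^{\min\text{-}\ell_1}$ be a minimizer of $\|\beta\|_1$ subject to $\mathbf{X}\beta = \mathbf{y}$, and let $\hat{\beta}^{\min\text{-}\ell_2}$ be the minimizer of $\|\beta\|_2$ subject to $\mathbf{X}\beta = \mathbf{y}$. Then there exists $\bar{\delta} > 0$ such that: 1. $\hat{\beta}^{\min\text{-}\ell_1}$ minimizes $\beta \mapsto R_\infty^{\mathrm{adv}}(\beta; \delta)$ over $\mathbb{R}^m$ for all $0 < \delta < \bar{\delta}$; 2. $\hat{\beta}^{\min\text{-}\ell_2}$ minimizes $\beta \mapsto R_2^{\mathrm{adv}}(\beta; \delta)$ over $\mathbb{R}^m$ for all $0 < \delta < \bar{\delta}$.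
   Context: For $p \in [1,\infty]$ and $\delta \ge 0$, the empirical adversarial risk of a parameter $\beta \in \mathbb{R}^m$ on the data $\{(\mathbf{x}_i, y_i)\}_{i=1}^n \subset \mathbb{R}^m \times \mathbb{R}$ is $$R_p^{\mathrm{adv}}(\beta; \delta) = \frac{1}{n}\sum_{i=1}^n \max_{\|\Delta \mathbf{x}_i\|_p \le \delta} \big(y_i - (\mathbf{x}_i + \Delta\mathbf{x}_i)^\top \beta\big)^2,$$ where $\|\cdot\|_p$ is the $\ell_p$ norm on $\mathbb{R}^m$ (with $\|a\|_\infty = \max_i |a_i|$). *)

theory Defs
  imports "HOL-Analysis.Analysis"
begin

definition lp_norm :: "ereal \<Rightarrow> real^'m \<Rightarrow> real" where
  "lp_norm p a = (if p = \<infinity> then Max (range (\<lambda>i. \<bar>a $ i\<bar>))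
                  else (\<Sum>i\<in>UNIV. \<bar>a $ i\<bar> powr real_of_ereal p) powr (1 / real_of_ereal p))"

text \<open>Empirical adversarial risk. Rows of X (indexed by 'n) are the data points x_i.\<close>
definition adv_risk :: "ereal \<Rightarrow> real^'m^'n \<Rightarrow> real^'n \<Rightarrow> real^'m \<Rightarrow> real \<Rightarrow> real" where
  "adv_risk p X y \<beta> \<delta> =
     (1 / real CARD('n)) * (\<Sum>i\<in>UNIV. SUP d\<in>{d. lp_norm p d \<le> \<delta>}. (y $ i - (X $ i + d) \<bullet> \<beta>)\<^sup>2)"

end

theory Submission
  imports Defs
begin

(* Against l_p perturbations of radius \<delta> the worst case of the squared residual of a point is
   (|r| + \<delta> \<parallel>\<beta>\<parallel>_q)^2, where r is the clean residual and q the dual exponent (q = 1 for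
   p = \<infinity>, q = 2 for p = 2). An interpolator has no residuals, so its risk is (\<delta> \<parallel>b\<parallel>_q)^2.
   Full row rank lets any \<beta> be corrected to an interpolator at a cost linear in its residuals,
   so the minimal-norm interpolator b satisfies \<parallel>b\<parallel>_q \<le> \<parallel>\<beta>\<parallel>_q + C \<Sum> |r_i|. By Cauchy-Schwarz
   the risk of \<beta> is at least (\<Sum> |r_i| / n + \<delta> \<parallel>\<beta>\<parallel>_q)^2, which dominates (\<delta> \<parallel>b\<parallel>_q)^2
   as soon as \<delta> C \<le> 1/n. *)

lemma lp_norm_uminus [simp]: "lp_norm p (- v) = lp_norm p v"
  unfolding lp_norm_def by simp

lemma lp_norm_one: "lp_norm 1 v = (\<Sum>j\<in>UNIV. \<bar>v $ j\<bar>)"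
  unfolding lp_norm_def by simp

lemma lp_norm_nonneg: "0 \<le> lp_norm p v"
  unfolding lp_norm_def by (simp add: Max_ge_iff)

lemma lp_norm_two: "lp_norm 2 (v::real^'m) = norm v"
proof -
  have "(\<Sum>i\<in>UNIV. \<bar>v $ i\<bar> powr 2) = (\<Sum>i\<in>UNIV. (v $ i)\<^sup>2)"
    by (intro sum.cong refl) (simp add: powr_numeral)
  then show ?thesis
    unfolding lp_norm_def norm_vec_def L2_set_def
    by (simp add: powr_half_sqrt sum_nonneg)
qed

lemma lp_norm_infinity_le_iff: "lp_norm \<infinity> v \<le> \<delta> \<longleftrightarrow> (\<forall>j. \<bar>v $ j\<bar> \<le> \<delta>)"
  unfolding lp_norm_def by (simp add: Max_le_iff)

lemma lp_norm_one_le_add_norm_diff: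
  "lp_norm 1 (u::real^'m) \<le> lp_norm 1 v + real CARD('m) * norm (u - v)"
proof -
  have "lp_norm 1 u \<le> (\<Sum>j\<in>UNIV. \<bar>v $ j\<bar> + \<bar>(u - v) $ j\<bar>)"
    unfolding lp_norm_one by (intro sum_mono) simp
  also have "\<dots> \<le> lp_norm 1 v + (\<Sum>j\<in>(UNIV::'m set). norm (u - v))"
    unfolding lp_norm_one sum.distrib by (intro add_left_mono sum_mono component_le_norm_cart)
  finally show ?thesis by simp
qed

lemma lp_norm_two_le_add_norm_diff: "lp_norm 2 (u::real^'m) \<le> lp_norm 2 v + norm (u - v)"
  unfolding lp_norm_two by (rule norm_triangle_sub)

lemma abs_inner_le_lp_norm_infinity_one:
  "\<bar>d \<bullet> \<beta>\<bar> \<le> lp_norm \<infinity> d * lp_norm 1 (\<beta>::real^'m)"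
proof -
  have "\<bar>d \<bullet> \<beta>\<bar> \<le> (\<Sum>j\<in>UNIV. \<bar>d $ j\<bar> * \<bar>\<beta> $ j\<bar>)"
    unfolding inner_vec_def by (simp add: sum_abs flip: abs_mult)
  also have "\<dots> \<le> (\<Sum>j\<in>UNIV. lp_norm \<infinity> d * \<bar>\<beta> $ j\<bar>)"
    using lp_norm_infinity_le_iff[of d "lp_norm \<infinity> d"] by (intro sum_mono mult_right_mono) auto
  finally show ?thesis by (simp add: lp_norm_one sum_distrib_left)
qed

lemma SUP_square_residual_perturbed:
  fixes \<beta> w :: "'a::real_inner"
  assumes bound: "\<And>d. d \<in> D \<Longrightarrow> \<bar>d \<bullet> \<beta>\<bar> \<le> M"
    and "w \<in> D" "- w \<in> D" and attained: "w \<bullet> \<beta> = M"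
  shows "(SUP d\<in>D. (c - d \<bullet> \<beta>)\<^sup>2) = (\<bar>c\<bar> + M)\<^sup>2"
proof (rule cSup_eq_maximum)
  show "(\<bar>c\<bar> + M)\<^sup>2 \<in> (\<lambda>d. (c - d \<bullet> \<beta>)\<^sup>2) ` D"
  proof (cases "0 \<le> c")
    case True
    then have "(\<bar>c\<bar> + M)\<^sup>2 = (c - (- w) \<bullet> \<beta>)\<^sup>2" using attained by simp
    then show ?thesis using \<open>- w \<in> D\<close> by blast
  next
    case False
    then have "(\<bar>c\<bar> + M)\<^sup>2 = (c - w \<bullet> \<beta>)\<^sup>2" using attained by (simp add: power2_commute)
    then show ?thesis using \<open>w \<in> D\<close> by blast
  qed
  fix z assume "z \<in> (\<lambda>d. (c - d \<bullet> \<beta>)\<^sup>2) ` D"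
  then obtain d where "d \<in> D" and z: "z = (c - d \<bullet> \<beta>)\<^sup>2" by blast
  then have "\<bar>c - d \<bullet> \<beta>\<bar> \<le> \<bar>c\<bar> + M" using bound by force
  then show "z \<le> (\<bar>c\<bar> + M)\<^sup>2" unfolding z by (metis abs_ge_zero power2_abs power_mono)
qed

lemma adv_risk_eq_worst_case:
  fixes X :: "real^'m^'n"
  assumes "\<And>d. lp_norm p d \<le> \<delta> \<Longrightarrow> \<bar>d \<bullet> \<beta>\<bar> \<le> M" and "lp_norm p w \<le> \<delta>" "w \<bullet> \<beta> = M"
  shows "adv_risk p X y \<beta> \<delta> = (1 / real CARD('n)) * (\<Sum>i\<in>UNIV. (\<bar>y $ i - X $ i \<bullet> \<beta>\<bar> + M)\<^sup>2)"
proof -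
  have "(SUP d\<in>{d. lp_norm p d \<le> \<delta>}. (y $ i - (X $ i + d) \<bullet> \<beta>)\<^sup>2) =
        (\<bar>y $ i - X $ i \<bullet> \<beta>\<bar> + M)\<^sup>2" for i
    unfolding inner_add_left diff_diff_eq[symmetric]
    by (rule SUP_square_residual_perturbed) (use assms in auto)
  then show ?thesis unfolding adv_risk_def by simp
qed

lemma adv_risk_infinity:
  fixes X :: "real^'m^'n"
  assumes "0 \<le> \<delta>"
  shows "adv_risk \<infinity> X y \<beta> \<delta> =
    (1 / real CARD('n)) * (\<Sum>i\<in>UNIV. (\<bar>y $ i - X $ i \<bullet> \<beta>\<bar> + \<delta> * lp_norm 1 \<beta>)\<^sup>2)"
proof (rule adv_risk_eq_worst_case)
  show "\<bar>d \<bullet> \<beta>\<bar> \<le> \<delta> * lp_norm 1 \<beta>" if "lp_norm \<infinity> d \<le> \<delta>" for d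
    using abs_inner_le_lp_norm_infinity_one[of d \<beta>] mult_right_mono[OF that lp_norm_nonneg[of 1 \<beta>]]
    by linarith
  let ?w = "\<chi> j. \<delta> * sgn (\<beta> $ j)"
  show "lp_norm \<infinity> ?w \<le> \<delta>"
    unfolding lp_norm_infinity_le_iff using assms by (simp add: abs_mult abs_sgn_eq)
  show "?w \<bullet> \<beta> = \<delta> * lp_norm 1 \<beta>"
    unfolding inner_vec_def lp_norm_one
    by (simp add: sum_distrib_left abs_sgn mult.left_commute mult.commute)
qed

lemma adv_risk_two:
  fixes X :: "real^'m^'n"
  assumes "0 \<le> \<delta>"
  shows "adv_risk 2 X y \<beta> \<delta> =
    (1 / real CARD('n)) * (\<Sum>i\<in>UNIV. (\<bar>y $ i - X $ i \<bullet> \<beta>\<bar> + \<delta> * lp_norm 2 \<beta>)\<^sup>2)"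
proof (rule adv_risk_eq_worst_case)
  show "\<bar>d \<bullet> \<beta>\<bar> \<le> \<delta> * lp_norm 2 \<beta>" if "lp_norm 2 d \<le> \<delta>" for d
    using Cauchy_Schwarz_ineq2[of d \<beta>] mult_right_mono[OF that norm_ge_zero[of \<beta>]]
    unfolding lp_norm_two by linarith
  let ?w = "(\<delta> / norm \<beta>) *\<^sub>R \<beta>"
  show "lp_norm 2 ?w \<le> \<delta>"
    unfolding lp_norm_two using assms by (cases "\<beta> = 0") auto
  show "?w \<bullet> \<beta> = \<delta> * lp_norm 2 \<beta>"
    unfolding lp_norm_two
    by (cases "\<beta> = 0") (auto simp: power2_norm_eq_inner[symmetric] power2_eq_square)
qed

lemma full_row_rank_interpolation_bound:
  fixes X :: "real^'m^'n"
  assumes "rank X = CARD('n)"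
  obtains K where "K > 0"
    and "\<And>y \<beta>. \<exists>\<gamma>. X *v \<gamma> = y \<and> norm (\<gamma> - \<beta>) \<le> K * (\<Sum>i\<in>UNIV. \<bar>y $ i - X $ i \<bullet> \<beta>\<bar>)"
proof -
  obtain B :: "real^'n^'m" where XB: "X ** B = mat 1"
    using assms full_rank_surjective matrix_right_invertible_surjective by blast
  obtain K where "K > 0" and K: "\<And>x. norm (B *v x) \<le> K * norm x"
    using linear_bounded_pos[OF matrix_vector_mul_linear[of B]] by blast
  have "X *v (\<beta> + B *v (y - X *v \<beta>)) = y \<and>
        norm ((\<beta> + B *v (y - X *v \<beta>)) - \<beta>) \<le> K * (\<Sum>i\<in>UNIV. \<bar>y $ i - X $ i \<bullet> \<beta>\<bar>)" for y \<beta>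
  proof
    show "X *v (\<beta> + B *v (y - X *v \<beta>)) = y"
      by (simp add: matrix_vector_right_distrib matrix_vector_mul_assoc XB)
    have "norm (B *v (y - X *v \<beta>)) \<le> K * norm (y - X *v \<beta>)" by (rule K)
    also have "\<dots> \<le> K * (\<Sum>i\<in>UNIV. \<bar>(y - X *v \<beta>) $ i\<bar>)"
      using \<open>K > 0\<close> norm_le_l1_cart[of "y - X *v \<beta>"] by (intro mult_left_mono) auto
    finally show "norm ((\<beta> + B *v (y - X *v \<beta>)) - \<beta>) \<le> K * (\<Sum>i\<in>UNIV. \<bar>y $ i - X $ i \<bullet> \<beta>\<bar>)"
      by (simp add: matrix_vector_mul_component)
  qed
  then show ?thesis using \<open>K > 0\<close> that by blast
qed

lemma minimal_interpolant_le:
  fixes X :: "real^'m^'n" and N :: "real^'m \<Rightarrow> real"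
  assumes lipschitz: "\<And>u v. N u \<le> N v + L * norm (u - v)" and "0 \<le> L" "L * K \<le> C"
    and correction: "\<And>\<beta>. \<exists>\<gamma>. X *v \<gamma> = y \<and> norm (\<gamma> - \<beta>) \<le> K * (\<Sum>i\<in>UNIV. \<bar>y $ i - X $ i \<bullet> \<beta>\<bar>)"
    and minimal: "\<forall>\<beta>. X *v \<beta> = y \<longrightarrow> N b \<le> N \<beta>"
  shows "N b \<le> N \<beta> + C * (\<Sum>i\<in>UNIV. \<bar>y $ i - X $ i \<bullet> \<beta>\<bar>)"
proof -
  let ?r = "\<Sum>i\<in>UNIV. \<bar>y $ i - X $ i \<bullet> \<beta>\<bar>"
  obtain \<gamma> where "X *v \<gamma> = y" and \<gamma>: "norm (\<gamma> - \<beta>) \<le> K * ?r"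
    using correction by blast
  have "N b \<le> N \<gamma>" using minimal \<open>X *v \<gamma> = y\<close> by blast
  also have "\<dots> \<le> N \<beta> + L * norm (\<gamma> - \<beta>)" by (rule lipschitz)
  also have "\<dots> \<le> N \<beta> + L * K * ?r" using mult_left_mono[OF \<gamma> \<open>0 \<le> L\<close>] by simp
  also have "\<dots> \<le> N \<beta> + C * ?r" using mult_right_mono[OF \<open>L * K \<le> C\<close>, of ?r] by (simp add: sum_nonneg)
  finally show ?thesis .
qed

lemma square_le_mean_square_shifted:
  fixes s :: "'n::finite \<Rightarrow> real"
  assumes "\<And>i. 0 \<le> s i" "0 \<le> a" "0 \<le> t" "t \<le> a + C * sum s UNIV"
    and "0 \<le> \<delta>" "\<delta> * real CARD('n) * C \<le> 1"
  shows "(\<delta> * t)\<^sup>2 \<le> (1 / real CARD('n)) * (\<Sum>i\<in>UNIV. (s i + \<delta> * a)\<^sup>2)"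
proof -
  define n where "n = real CARD('n)"
  define S where "S = sum s UNIV"
  have "n > 0" by (simp add: n_def)
  have "0 \<le> S" unfolding S_def using assms(1) by (simp add: sum_nonneg)
  have "\<delta> * C \<le> 1 / n" using assms(6) \<open>n > 0\<close> by (simp add: n_def field_simps)
  then have "\<delta> * C * S \<le> S / n" using mult_right_mono[OF _ \<open>0 \<le> S\<close>] by fastforce
  moreover have "\<delta> * t \<le> \<delta> * a + \<delta> * C * S"
    using mult_left_mono[OF assms(4) assms(5)] unfolding S_def by (simp add: algebra_simps)
  ultimately have "\<delta> * t \<le> S / n + \<delta> * a" by linarith
  then have "(\<delta> * t)\<^sup>2 \<le> (S / n + \<delta> * a)\<^sup>2"
    using assms(3,5) by (intro power_mono) auto
  also have "\<dots> = (\<Sum>i\<in>UNIV. s i + \<delta> * a)\<^sup>2 / n ^ 2"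
    using \<open>n > 0\<close> by (simp add: S_def n_def sum.distrib field_simps)
  also have "\<dots> \<le> ((\<Sum>i\<in>UNIV. (s i + \<delta> * a)\<^sup>2) * n) / n ^ 2"
    unfolding n_def by (intro divide_right_mono sum_squared_le_sum_of_squares) auto
  also have "\<dots> = (1 / n) * (\<Sum>i\<in>UNIV. (s i + \<delta> * a)\<^sup>2)"
    using \<open>n > 0\<close> by (simp add: power2_eq_square)
  finally show ?thesis unfolding n_def .
qed

lemma interpolant_minimizes_adv_risk:
  fixes X :: "real^'m^'n" and N :: "real^'m \<Rightarrow> real"
  assumes risk: "\<And>\<beta>. adv_risk p X y \<beta> \<delta> =
      (1 / real CARD('n)) * (\<Sum>i\<in>UNIV. (\<bar>y $ i - X $ i \<bullet> \<beta>\<bar> + \<delta> * N \<beta>)\<^sup>2)"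
    and "\<And>\<beta>. 0 \<le> N \<beta>" and "X *v b = y"
    and "N b \<le> N \<beta> + C * (\<Sum>i\<in>UNIV. \<bar>y $ i - X $ i \<bullet> \<beta>\<bar>)"
    and "0 \<le> \<delta>" "\<delta> * real CARD('n) * C \<le> 1"
  shows "adv_risk p X y b \<delta> \<le> adv_risk p X y \<beta> \<delta>"
proof -
  have "y $ i - X $ i \<bullet> b = 0" for i
    using \<open>X *v b = y\<close> by (auto simp: matrix_vector_mul_component)
  then have "adv_risk p X y b \<delta> = (\<delta> * N b)\<^sup>2" by (simp add: risk)
  also have "\<dots> \<le> adv_risk p X y \<beta> \<delta>"
    unfolding risk using assms(2,4-) by (intro square_le_mean_square_shifted) auto
  finally show ?thesis .
qed

theorem theorem2:
  fixes X :: "real^'m^'n" and y :: "real^'n" and b1 b2 :: "real^'m"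
  assumes "rank X = CARD('n)"
    and "X *v b1 = y" and "\<forall>\<beta>. X *v \<beta> = y \<longrightarrow> lp_norm 1 b1 \<le> lp_norm 1 \<beta>"
    and "X *v b2 = y" and "\<forall>\<beta>. X *v \<beta> = y \<longrightarrow> lp_norm 2 b2 \<le> lp_norm 2 \<beta>"
  shows "\<exists>\<delta>bar>0. \<forall>\<delta>. 0 < \<delta> \<and> \<delta> < \<delta>bar \<longrightarrow>
           (\<forall>\<beta>. adv_risk \<infinity> X y b1 \<delta> \<le> adv_risk \<infinity> X y \<beta> \<delta>) \<and>
           (\<forall>\<beta>. adv_risk 2 X y b2 \<delta> \<le> adv_risk 2 X y \<beta> \<delta>)"
proof -
  obtain K where "K > 0" and correction:
    "\<And>\<beta>. \<exists>\<gamma>. X *v \<gamma> = y \<and> norm (\<gamma> - \<beta>) \<le> K * (\<Sum>i\<in>UNIV. \<bar>y $ i - X $ i \<bullet> \<beta>\<bar>)"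
    using full_row_rank_interpolation_bound[OF assms(1)] by metis
  define C where "C = real CARD('m) * K"
  have "K \<le> C" "C > 0" using \<open>K > 0\<close> by (auto simp: C_def)
  have growth1: "lp_norm 1 b1 \<le> lp_norm 1 \<beta> + C * (\<Sum>i\<in>UNIV. \<bar>y $ i - X $ i \<bullet> \<beta>\<bar>)" for \<beta>
    by (rule minimal_interpolant_le[OF lp_norm_one_le_add_norm_diff _ _ correction assms(3)])
      (simp_all add: C_def)
  have growth2: "lp_norm 2 b2 \<le> lp_norm 2 \<beta> + C * (\<Sum>i\<in>UNIV. \<bar>y $ i - X $ i \<bullet> \<beta>\<bar>)" for \<beta>
    by (rule minimal_interpolant_le[where L = 1, OF _ _ _ correction assms(5)])
      (use \<open>K \<le> C\<close> lp_norm_two_le_add_norm_diff in simp_all)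
  show ?thesis
  proof (intro exI[of _ "1 / (real CARD('n) * C)"] conjI allI impI)
    fix \<delta> \<beta> assume "0 < \<delta> \<and> \<delta> < 1 / (real CARD('n) * C)"
    then have "0 \<le> \<delta>" "\<delta> * real CARD('n) * C \<le> 1" using \<open>C > 0\<close> by (auto simp: field_simps)
    then show "adv_risk \<infinity> X y b1 \<delta> \<le> adv_risk \<infinity> X y \<beta> \<delta>"
      by (intro interpolant_minimizes_adv_risk[OF adv_risk_infinity lp_norm_nonneg assms(2) growth1])
    show "adv_risk 2 X y b2 \<delta> \<le> adv_risk 2 X y \<beta> \<delta>"
      using \<open>0 \<le> \<delta>\<close> \<open>\<delta> * real CARD('n) * C \<le> 1\<close>
      by (intro interpolant_minimizes_adv_risk[OF adv_risk_two lp_norm_nonneg assms(4) growth2])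
  qed (use \<open>C > 0\<close> in simp)
qed

end
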